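(* For every hypothesis class $\mathcal{H}\subseteq\{0,1\}^{\mathcal{X}}$, $\mathtt{CD}(\mathcal{H})\le\max\{2\,\mathtt{LD}(\mathcal{H})\log_2(\mathtt{LD}(\mathcal{H})),\,300\}$ (with the convention $0\log_2 0=0$).
   Context: A dataset of size $m$ is $S=((x_1,y_1),\dots,(x_m,y_m))\in(\mathcal{X}\times\{0,1\})^m$; it is $\mathcal{H}$-realizable if some $h\in\mathcal{H}$ satisfies $h(x_i)=y_i$ for all $i$. $G_m(\mathcal{H})$ is the graph on realizable datasets of size $m$ with $S,S'$ adjacent iff there is $x$ with $(x,0)$ appearing in $S$ and $(x,1)$ appearing in $S'$; $\omega_m$ is its clique number; $\mathtt{CD}(\mathcal{H})=\sup\{m:\omega_m=2^m\}$. A mistake tree is a complete binary tree whose internal nodes are labeled by points of $\mathcal{X}$, each internal node having one outgoing edge labeled $0$ and one labeled $1$; a root-to-leaf path yields the sequence of (node label, edge label) pairs. $\mathcal{H}$ shatters the tree if every root-to-leaf path is realizable by $\mathcal{H}$. $\mathtt{LD}(\mathcal{H})$ is the largest depth of a complete mistake tree shattered by $\mathcal{H}$ ($\infty$ if unbounded). *)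

theory Defs
  imports Complex_Main "HOL-Library.Extended_Real"
begin

text \<open>Hypothesis classes are sets of functions 'x => bool (False = label 0, True = label 1).
A dataset of size m is a list of length m of labelled points.\<close>

definition realizable :: "('x \<Rightarrow> bool) set \<Rightarrow> ('x \<times> bool) list \<Rightarrow> bool" where
  "realizable H S \<longleftrightarrow> (\<exists>h\<in>H. \<forall>(x, y)\<in>set S. h x = y)"

definition datasets :: "('x \<Rightarrow> bool) set \<Rightarrow> nat \<Rightarrow> ('x \<times> bool) list set" where
  "datasets H m = {S. length S = m \<and> realizable H S}"

definition adjacent :: "('x \<times> bool) list \<Rightarrow> ('x \<times> bool) list \<Rightarrow> bool" where
  "adjacent S S' \<longleftrightarrow> (\<exists>x. ((x, False) \<in> set S \<and> (x, True) \<in> set S') \<or>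
                          ((x, False) \<in> set S' \<and> (x, True) \<in> set S))"

definition is_clique :: "('x \<Rightarrow> bool) set \<Rightarrow> nat \<Rightarrow> ('x \<times> bool) list set \<Rightarrow> bool" where
  "is_clique H m C \<longleftrightarrow> C \<subseteq> datasets H m \<and> (\<forall>S\<in>C. \<forall>S'\<in>C. S \<noteq> S' \<longrightarrow> adjacent S S')"

definition clique_number :: "('x \<Rightarrow> bool) set \<Rightarrow> nat \<Rightarrow> enat" where
  "clique_number H m = Sup {enat (card C) | C. finite C \<and> is_clique H m C}"

definition CD :: "('x \<Rightarrow> bool) set \<Rightarrow> enat" where
  "CD H = Sup {enat m | m. clique_number H m = enat (2 ^ m)}"

text \<open>Mistake trees: Node x T0 T1, T0 along the edge labelled 0, T1 along the edge labelled 1.\<close>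
datatype 'x mtree = Leaf | Node 'x "'x mtree" "'x mtree"

fun complete_depth :: "'x mtree \<Rightarrow> nat \<Rightarrow> bool" where
  "complete_depth Leaf d = (d = 0)"
| "complete_depth (Node x l r) d = (d > 0 \<and> complete_depth l (d - 1) \<and> complete_depth r (d - 1))"

fun paths :: "'x mtree \<Rightarrow> ('x \<times> bool) list set" where
  "paths Leaf = {[]}"
| "paths (Node x l r) = ((\<lambda>p. (x, False) # p) ` paths l) \<union> ((\<lambda>p. (x, True) # p) ` paths r)"

definition shatters_tree :: "('x \<Rightarrow> bool) set \<Rightarrow> 'x mtree \<Rightarrow> bool" where
  "shatters_tree H T \<longleftrightarrow> (\<forall>p\<in>paths T. realizable H p)"

definition LD :: "('x \<Rightarrow> bool) set \<Rightarrow> enat" where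
  "LD H = Sup {enat d | d. \<exists>T. complete_depth T d \<and> shatters_tree H T}"

end

theory Submission
  imports Defs
begin

text \<open>
  Let \<open>C\<close> be a clique of size \<open>2\<^sup>m\<close> in \<open>G\<^sub>m\<close> and \<open>U\<close> the finite set of points occurring in \<open>C\<close>.
  Each member of \<open>C\<close> is consistent with at least \<open>2\<^bsup>|U|-m\<^esup>\<close> labellings of \<open>U\<close>, and by adjacency
  no labelling is consistent with two members; hence every labelling agrees with some member.

  Call a path \<open>p\<close> \<open>r\<close>-shattering if \<open>H\<close> shatters a depth-\<open>r\<close> mistake tree hung below \<open>p\<close>. If \<open>p\<close>
  is not \<open>r\<close>-shattering, at most \<open>1 + m + \<dots> + m\<^bsup>r-1\<^esup>\<close> members of \<open>C\<close> contain \<open>p\<close>: take the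
  member \<open>\<gamma>\<close> agreeing with the labelling "\<open>x \<mapsto> 1\<close> iff \<open>p\<close> extended by \<open>(x, 1)\<close> is
  \<open>(r-1)\<close>-shattering"; every other member containing \<open>p\<close> conflicts with \<open>\<gamma>\<close> at one of its \<open>m\<close>
  points \<open>x\<close>, and so contains \<open>p\<close> extended by the label at \<open>x\<close> that is not \<open>(r-1)\<close>-shattering.
  For \<open>p = []\<close> and \<open>r = LD + 1\<close> this gives \<open>2\<^sup>m \<le> (m+1)\<^bsup>LD\<^esup>\<close>, and elementary estimates turn
  that into \<open>m \<le> max (2 LD log\<^sub>2 LD) 300\<close>.
\<close>

definition agrees :: "('x \<Rightarrow> bool) \<Rightarrow> ('x \<times> bool) list \<Rightarrow> bool" where
  "agrees f S \<longleftrightarrow> (\<forall>(x, y)\<in>set S. f x = y)"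

lemma agreesD: "agrees f S \<Longrightarrow> (x, y) \<in> set S \<Longrightarrow> f x = y"
  unfolding agrees_def by auto

lemma realizable_iff_agrees: "realizable H S \<longleftrightarrow> (\<exists>h\<in>H. agrees h S)"
  unfolding realizable_def agrees_def ..

lemma realizable_subset: "realizable H S \<Longrightarrow> set p \<subseteq> set S \<Longrightarrow> realizable H p"
  unfolding realizable_def by (meson subsetD)

lemma card_fst_set_le_length: "card (fst ` set S) \<le> length S"
  using card_image_le[of "set S" fst] card_length[of S] by simp

lemma is_cliqueD:
  assumes "is_clique H m C" "S \<in> C"
  shows "length S = m" "realizable H S"
  using assms unfolding is_clique_def datasets_def by auto

lemma is_clique_adjacent:
  "is_clique H m C \<Longrightarrow> S \<in> C \<Longrightarrow> S' \<in> C \<Longrightarrow> S \<noteq> S' \<Longrightarrow> adjacent S S'"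
  unfolding is_clique_def by simp

lemma card_Pow_Int_eq:
  assumes "finite U" "D \<subseteq> U" "T \<subseteq> D"
  shows "card {Y \<in> Pow U. Y \<inter> D = T} = 2 ^ card (U - D)"
proof -
  have "bij_betw (\<lambda>Z. Z \<union> T) (Pow (U - D)) {Y \<in> Pow U. Y \<inter> D = T}"
    by (rule bij_betw_byWitness[where f' = "\<lambda>Y. Y - D"]) (use assms in auto)
  then show ?thesis
    using assms by (simp add: bij_betw_same_card[symmetric] card_Pow)
qed

lemma agrees_mem_iff_Int:
  assumes "agrees h S"
  shows "agrees (\<lambda>x. x \<in> Y) S \<longleftrightarrow> Y \<inter> fst ` set S = {x. (x, True) \<in> set S}"
proof
  assume Y: "agrees (\<lambda>x. x \<in> Y) S"
  show "Y \<inter> fst ` set S = {x. (x, True) \<in> set S}"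
  proof (intro equalityI subsetI)
    fix x assume "x \<in> Y \<inter> fst ` set S"
    then obtain y where "x \<in> Y" "(x, y) \<in> set S" by auto
    then show "x \<in> {x. (x, True) \<in> set S}" using Y unfolding agrees_def by auto
  next
    fix x assume "x \<in> {x. (x, True) \<in> set S}"
    then show "x \<in> Y \<inter> fst ` set S" using Y unfolding agrees_def by (auto intro: rev_image_eqI)
  qed
next
  assume Y: "Y \<inter> fst ` set S = {x. (x, True) \<in> set S}"
  show "agrees (\<lambda>x. x \<in> Y) S"
    unfolding agrees_def
  proof clarify
    fix x y assume xy: "(x, y) \<in> set S"
    then have "x \<in> fst ` set S" by (auto intro: rev_image_eqI)
    moreover have "(x, True) \<in> set S \<longleftrightarrow> y"
      using xy agreesD[OF assms xy] agreesD[OF assms, of x True] by (cases y) auto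
    ultimately show "(x \<in> Y) = y" using Y by blast
  qed
qed

lemma card_agreeing_subsets:
  assumes "finite U" "fst ` set S \<subseteq> U" "agrees h S"
  shows "2 ^ card U \<le> 2 ^ length S * card {Y \<in> Pow U. agrees (\<lambda>x. x \<in> Y) S}"
proof -
  let ?D = "fst ` set S"
  have "{x. (x, True) \<in> set S} \<subseteq> ?D" by (auto intro: rev_image_eqI)
  then have "card {Y \<in> Pow U. agrees (\<lambda>x. x \<in> Y) S} = 2 ^ card (U - ?D)"
    using card_Pow_Int_eq[OF assms(1,2)] by (simp add: agrees_mem_iff_Int[OF assms(3)])
  also have "card (U - ?D) = card U - card ?D"
    using assms(2) by (simp add: card_Diff_subset)
  finally have card_eq: "card {Y \<in> Pow U. agrees (\<lambda>x. x \<in> Y) S} = 2 ^ (card U - card ?D)" .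
  have "(2::nat) ^ card U \<le> 2 ^ (card ?D + (card U - card ?D))" by simp
  also have "\<dots> \<le> 2 ^ (length S + (card U - card ?D))"
    using card_fst_set_le_length[of S] by (intro power_increasing) auto
  finally show ?thesis unfolding card_eq by (simp add: power_add)
qed

lemma clique_covers:
  assumes fin: "finite C" and clique: "is_clique H m C" and card_C: "card C = 2 ^ m"
  shows "\<exists>S\<in>C. agrees f S"
proof -
  define U where "U = (\<Union>S\<in>C. fst ` set S)"
  \<comment> \<open>a labelling of \<open>U\<close> is encoded by the set \<open>Y\<close> of points labelled \<open>1\<close>\<close>
  define A where "A S = {Y \<in> Pow U. agrees (\<lambda>x. x \<in> Y) S}" for S
  have "finite U" using fin unfolding U_def by simp
  have card_A: "2 ^ card U \<le> 2 ^ m * card (A S)" if "S \<in> C" for S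
  proof -
    have "length S = m" "realizable H S" using is_cliqueD[OF clique that] by auto
    then obtain h where "agrees h S" "length S = m" unfolding realizable_iff_agrees by blast
    moreover have "fst ` set S \<subseteq> U" using that unfolding U_def by blast
    ultimately show ?thesis
      using card_agreeing_subsets[OF \<open>finite U\<close>, of S h] unfolding A_def by simp
  qed
  have disjoint: "A S \<inter> A S' = {}" if "S \<in> C" "S' \<in> C" "S \<noteq> S'" for S S'
  proof -
    have "adjacent S S'" using is_clique_adjacent[OF clique] that by simp
    then obtain x y where "(x, y) \<in> set S" "(x, \<not> y) \<in> set S'"
      unfolding adjacent_def by (metis (full_types))
    then show ?thesis unfolding A_def using agreesD[of _ S x y] agreesD[of _ S' x "\<not> y"] by auto
  qed
  have "2 ^ m * card (Pow U) = (\<Sum>S\<in>C. 2 ^ card U)"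
    using card_C \<open>finite U\<close> by (simp add: card_Pow)
  also have "\<dots> \<le> (\<Sum>S\<in>C. 2 ^ m * card (A S))" using card_A by (rule sum_mono)
  also have "\<dots> = 2 ^ m * card (\<Union>S\<in>C. A S)"
    using fin \<open>finite U\<close> disjoint
    by (simp add: sum_distrib_left[symmetric] card_UN_disjoint A_def)
  finally have "card (Pow U) \<le> card (\<Union>S\<in>C. A S)" by simp
  then have "(\<Union>S\<in>C. A S) = Pow U"
    using \<open>finite U\<close> by (intro card_seteq) (auto simp: A_def)
  then obtain S where "S \<in> C" and S: "agrees (\<lambda>x. x \<in> {x \<in> U. f x}) S"
    unfolding A_def by blast
  have "agrees f S"
    unfolding agrees_def
  proof clarify
    fix x y assume "(x, y) \<in> set S"
    moreover from this have "x \<in> U" using \<open>S \<in> C\<close> unfolding U_def by force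
    ultimately show "f x = y" using agreesD[OF S] by auto
  qed
  then show ?thesis using \<open>S \<in> C\<close> by blast
qed

definition shatters_below :: "('x \<Rightarrow> bool) set \<Rightarrow> ('x \<times> bool) list \<Rightarrow> nat \<Rightarrow> bool" where
  "shatters_below H p k \<longleftrightarrow> (\<exists>T. complete_depth T k \<and> (\<forall>q\<in>paths T. realizable H (p @ q)))"

lemma shatters_below_0_iff: "shatters_below H p 0 \<longleftrightarrow> realizable H p"
proof
  assume "shatters_below H p 0"
  then obtain T where "complete_depth T 0" "\<forall>q\<in>paths T. realizable H (p @ q)"
    unfolding shatters_below_def by auto
  moreover have "T = Leaf" using \<open>complete_depth T 0\<close> by (cases T) auto
  ultimately show "realizable H p" by auto
next
  assume "realizable H p"
  then show "shatters_below H p 0" unfolding shatters_below_def by (intro exI[of _ Leaf]) auto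
qed

lemma shatters_below_Suc:
  assumes "shatters_below H (p @ [(x, False)]) k" "shatters_below H (p @ [(x, True)]) k"
  shows "shatters_below H p (Suc k)"
proof -
  obtain T0 where "complete_depth T0 k" "\<forall>q\<in>paths T0. realizable H (p @ [(x, False)] @ q)"
    using assms(1) unfolding shatters_below_def by auto
  moreover obtain T1 where "complete_depth T1 k" "\<forall>q\<in>paths T1. realizable H (p @ [(x, True)] @ q)"
    using assms(2) unfolding shatters_below_def by auto
  ultimately show ?thesis
    unfolding shatters_below_def by (intro exI[of _ "Node x T0 T1"]) auto
qed

lemma not_shatters_below_Suc_LD:
  assumes "LD H = enat d"
  shows "\<not> shatters_below H [] (Suc d)"
proof
  assume "shatters_below H [] (Suc d)"
  then obtain T where "complete_depth T (Suc d)" "shatters_tree H T"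
    unfolding shatters_below_def shatters_tree_def by auto
  then have "enat (Suc d) \<le> LD H" unfolding LD_def by (blast intro: Sup_upper)
  then show False using assms by simp
qed

lemma clique_member_conflicts:
  assumes "is_clique H m C" "\<gamma> \<in> C" "agrees g \<gamma>" "S \<in> C" "S \<noteq> \<gamma>"
  shows "\<exists>x\<in>fst ` set \<gamma>. (x, \<not> g x) \<in> set S"
proof -
  have "adjacent \<gamma> S" using is_clique_adjacent[OF assms(1,2,4)] assms(5) by simp
  then obtain x y where "(x, y) \<in> set \<gamma>" "(x, \<not> y) \<in> set S"
    unfolding adjacent_def by (metis (full_types))
  moreover from this have "g x = y" using agreesD[OF assms(3)] by blast
  ultimately have "x \<in> fst ` set \<gamma>" "(x, \<not> g x) \<in> set S" by (auto intro: rev_image_eqI)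
  then show ?thesis ..
qed

text \<open>\<open>extension_bound m r = 1 + m + \<dots> + m\<^bsup>r-1\<^esup>\<close>.\<close>

fun extension_bound :: "nat \<Rightarrow> nat \<Rightarrow> nat" where
  "extension_bound m 0 = 0"
| "extension_bound m (Suc r) = Suc (m * extension_bound m r)"

lemma extension_bound_Suc_le: "extension_bound m (Suc d) \<le> (m + 1) ^ d"
proof (induction d)
  case 0
  then show ?case by simp
next
  case (Suc d)
  have "extension_bound m (Suc (Suc d)) \<le> 1 + m * (m + 1) ^ d"
    using mult_le_mono2[OF Suc.IH] by simp
  also have "\<dots> \<le> (m + 1) ^ d + m * (m + 1) ^ d" by simp
  also have "\<dots> = (m + 1) ^ Suc d" by simp
  finally show ?case .
qed

lemma card_extensions_le:
  assumes fin: "finite C" and clique: "is_clique H m C" and covers: "\<forall>f. \<exists>S\<in>C. agrees f S"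
  shows "\<not> shatters_below H p r \<Longrightarrow> card {S \<in> C. set p \<subseteq> set S} \<le> extension_bound m r"
proof (induction r arbitrary: p)
  case 0
  then have "{S \<in> C. set p \<subseteq> set S} = {}"
    using is_cliqueD(2)[OF clique] realizable_subset unfolding shatters_below_0_iff by auto
  then show ?case by (simp only: card.empty extension_bound.simps le_refl)
next
  case (Suc r)
  define g where "g x \<longleftrightarrow> shatters_below H (p @ [(x, True)]) r" for x
  define F where "F x = {S \<in> C. set (p @ [(x, \<not> g x)]) \<subseteq> set S}" for x
  have F_le: "card (F x) \<le> extension_bound m r" for x
  proof -
    have "\<not> shatters_below H (p @ [(x, \<not> g x)]) r"
    proof (cases "g x")
      case True
      then show ?thesis using Suc.prems shatters_below_Suc[of H p x r] unfolding g_def by auto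
    qed (simp add: g_def)
    then show ?thesis using Suc.IH unfolding F_def by blast
  qed
  obtain \<gamma> where "\<gamma> \<in> C" and \<gamma>: "agrees g \<gamma>" using covers by blast
  let ?X = "fst ` set \<gamma>"
  have "card ?X \<le> m"
    using is_cliqueD(1)[OF clique \<open>\<gamma> \<in> C\<close>] card_fst_set_le_length[of \<gamma>] by simp
  have "{S \<in> C. set p \<subseteq> set S} \<subseteq> insert \<gamma> (\<Union>x\<in>?X. F x)"
    using clique_member_conflicts[OF clique \<open>\<gamma> \<in> C\<close> \<gamma>] unfolding F_def by fastforce
  then have "card {S \<in> C. set p \<subseteq> set S} \<le> card (insert \<gamma> (\<Union>x\<in>?X. F x))"
    by (rule card_mono[rotated]) (use fin in \<open>auto simp: F_def\<close>)
  also have "\<dots> \<le> Suc (card (\<Union>x\<in>?X. F x))"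
    by (rule card_insert_le_m1) auto
  also have "card (\<Union>x\<in>?X. F x) \<le> (\<Sum>x\<in>?X. card (F x))"
    by (rule card_UN_le) simp
  also have "\<dots> \<le> card ?X * extension_bound m r"
    using sum_bounded_above[of ?X "\<lambda>x. card (F x)"] F_le by simp
  also have "\<dots> \<le> m * extension_bound m r" using \<open>card ?X \<le> m\<close> by simp
  finally show ?case by simp
qed

lemma two_power_le_of_clique:
  assumes "finite C" "is_clique H m C" "card C = 2 ^ m" "LD H = enat d"
  shows "(2::nat) ^ m \<le> (m + 1) ^ d"
proof -
  have "card {S \<in> C. set [] \<subseteq> set S} \<le> extension_bound m (Suc d)"
    using card_extensions_le[OF assms(1,2)] clique_covers[OF assms(1-3)]
      not_shatters_below_Suc_LD[OF assms(4)] by blast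
  then show ?thesis
    using extension_bound_Suc_le[of m d] assms(3) by simp
qed

lemma Suc_mult_less_two_power: "5 \<le> q \<Longrightarrow> (q + 1) * q < (2::nat) ^ q"
proof (induction q rule: dec_induct)
  case base
  then show ?case by simp
next
  case (step q)
  have "(Suc q + 1) * Suc q = (q + 1) * q + 2 * (q + 1)" by (simp add: algebra_simps)
  also have "2 * (q + 1) \<le> (q + 1) * q" using mult_le_mono2[of 2 q "q + 1"] step(1) by simp
  finally show ?case using step(3) by simp
qed

text \<open>
  With \<open>q = m div d\<close> we have \<open>d \<le> q\<close>, hence \<open>m + 1 \<le> (q + 1) q < 2\<^sup>q\<close> (the constant \<open>300\<close> forces
  \<open>q \<ge> 5\<close>), and \<open>q d \<le> m\<close>.
\<close>

lemma Suc_power_less_two_power: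
  assumes "d * d \<le> m" "300 < m"
  shows "(m + 1) ^ d < (2::nat) ^ m"
proof (cases "d = 0")
  case True
  then show ?thesis using assms(2) one_less_power[of "2::nat" m] by simp
next
  case False
  define q where "q = m div d"
  have "d \<le> q" unfolding q_def using div_le_mono[OF assms(1), of d] False by simp
  have "q * d \<le> m" unfolding q_def by (rule div_times_less_eq_dividend)
  have "m < (q + 1) * d"
  proof -
    have "m = q * d + m mod d" unfolding q_def by simp
    moreover have "m mod d < d" using False by simp
    ultimately show ?thesis by (simp add: algebra_simps)
  qed
  have "5 \<le> q"
  proof (rule ccontr)
    assume "\<not> 5 \<le> q"
    then have "(q + 1) * d \<le> 5 * 4" using \<open>d \<le> q\<close> by (intro mult_le_mono) auto
    then show False using \<open>m < (q + 1) * d\<close> assms(2) by simp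
  qed
  have "m + 1 \<le> (q + 1) * q"
    using \<open>m < (q + 1) * d\<close> mult_le_mono2[OF \<open>d \<le> q\<close>, of "q + 1"] by simp
  also have "\<dots> < 2 ^ q" using Suc_mult_less_two_power[OF \<open>5 \<le> q\<close>] .
  finally have "(m + 1) ^ d < (2 ^ q) ^ d" using False by (intro power_strict_mono) auto
  also have "\<dots> \<le> 2 ^ m"
    using \<open>q * d \<le> m\<close> by (simp add: power_mult[symmetric] power_increasing)
  finally show ?thesis .
qed

lemma two_power_le_Suc_power_imp:
  assumes "(2::nat) ^ m \<le> (m + 1) ^ d" "300 < m"
  shows "2 \<le> d" "2 ^ m \<le> d ^ (2 * d)"
proof -
  have "m + 1 \<le> d * d"
    using Suc_power_less_two_power[of d m] assms by linarith
  show "2 \<le> d"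
  proof (rule ccontr)
    assume "\<not> 2 \<le> d"
    then have "d * d \<le> 1 * 1" by (intro mult_le_mono) auto
    then show False using \<open>m + 1 \<le> d * d\<close> assms(2) by simp
  qed
  have "(m + 1) ^ d \<le> (d * d) ^ d" using \<open>m + 1 \<le> d * d\<close> by (rule power_mono) simp
  then show "2 ^ m \<le> d ^ (2 * d)"
    using assms(1) by (simp add: power_mult power2_eq_square)
qed

lemma le_max_log_of_two_power_le:
  assumes "(2::nat) ^ m \<le> (m + 1) ^ d"
  shows "real m \<le> max (if d = 0 then 0 else 2 * real d * log 2 (real d)) 300"
proof (cases "m \<le> 300")
  case False
  then have "2 \<le> d" and "2 ^ m \<le> d ^ (2 * d)"
    using two_power_le_Suc_power_imp[OF assms] by auto
  then have "(2::real) ^ m \<le> real d ^ (2 * d)"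
    by (metis of_nat_le_iff of_nat_numeral of_nat_power)
  have "real m = log 2 (2 ^ m)" by simp
  also have "\<dots> \<le> log 2 (real d ^ (2 * d))"
    using \<open>(2::real) ^ m \<le> real d ^ (2 * d)\<close> \<open>2 \<le> d\<close> by (subst log_le_cancel_iff) auto
  also have "\<dots> = 2 * real d * log 2 (real d)" using \<open>2 \<le> d\<close> by (simp add: log_nat_power)
  finally show ?thesis using \<open>2 \<le> d\<close> by simp
qed simp

lemma Sup_enat_eq_imp_mem:
  assumes "Sup A = enat n" "n > 0"
  shows "enat n \<in> A"
proof -
  have "A \<noteq> {}" using assms by (auto simp: Sup_enat_def zero_enat_def)
  moreover have "finite A" using assms \<open>A \<noteq> {}\<close> by (auto simp: Sup_enat_def split: if_splits)
  ultimately show ?thesis using assms Max_in[of A] by (simp add: Sup_enat_def)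
qed

theorem mainTheorem13:
  fixes H :: "('x \<Rightarrow> bool) set"
  shows "ereal_of_enat (CD H) \<le>
    (case LD H of
       \<infinity> \<Rightarrow> \<infinity>
     | enat d \<Rightarrow> ereal (max (if d = 0 then 0 else 2 * real d * log 2 (real d)) 300))"
proof (cases "LD H")
  case (enat d)
  define B where "B = max (if d = 0 then 0 else 2 * real d * log 2 (real d)) (300::real)"
  have "300 \<le> B" unfolding B_def by simp
  have "enat m \<le> enat (nat \<lfloor>B\<rfloor>)" if \<omega>: "clique_number H m = enat (2 ^ m)" for m
  proof -
    obtain C where "finite C" "is_clique H m C" "card C = 2 ^ m"
      using Sup_enat_eq_imp_mem[OF \<omega>[unfolded clique_number_def]] by auto
    then have "(2::nat) ^ m \<le> (m + 1) ^ d" using enat by (rule two_power_le_of_clique)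
    then have "real m \<le> B" unfolding B_def by (rule le_max_log_of_two_power_le)
    then show ?thesis by (simp add: le_nat_floor)
  qed
  then have "CD H \<le> enat (nat \<lfloor>B\<rfloor>)" unfolding CD_def by (auto intro: Sup_least)
  then have "ereal_of_enat (CD H) \<le> ereal_of_enat (enat (nat \<lfloor>B\<rfloor>))"
    by (simp only: ereal_of_enat_le_iff)
  also have "\<dots> \<le> ereal B" using \<open>300 \<le> B\<close> by simp
  finally show ?thesis using enat B_def by simp
qed simp

end
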